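(* Let $M$ be a positive integer, $q\in(q_{KL},M+1]$, and let $x_1\dots x_N$ be a word occurring in some sequence of $\mathbf V_q$. Let $(p_n)\subset(1,M+1]$ be an increasing sequence converging to $q$ such that $\alpha(p_n)\in\mathbf V$ for every $n\ge1$. Then $x_1\dots x_N$ occurs in some sequence of $\mathbf V_{p_n}$ for all sufficiently large $n$.
   Context: Fix a positive integer $M$; all sequences have digits in $\{0,1,\dots,M\}$. For $q\in(1,M+1]$, $\alpha(q)$ is the quasi-greedy $q$-expansion of $1$ (lexicographically largest sequence $(a_i)$ not ending in $0^\infty$ with $\sum a_iq^{-i}=1$). Sequences are compared lexicographically; $\overline{(x_i)}=(M-x_1)(M-x_2)\dots$; $\sigma$ is the left shift. $\mathbf V_q$ is the set of $(x_i)$ with $\overline{\alpha(q)}\preccurlyeq\sigma^n((x_i))\preccurlyeq\alpha(q)$ for all $n\ge0$. $\mathbf V$ is the set of sequences $(a_i)$ with $\overline{(a_i)}\preccurlyeq\sigma^n((a_i))\preccurlyeq(a_i)$ for all $n\ge0$. $(\tau_i)_{i\ge0}$ is the Thue–Morse sequence; $q_{KL}$ is the base with $\alpha(q_{KL})=\lambda_1\lambda_2\dots$, $\lambda_i=k+\tau_i-\tau_{i-1}$ if $M=2k$, $\lambda_i=k+\tau_i$ if $M=2k+1$. *)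

theory Defs
  imports Complex_Main
begin

text \<open>Sequences are functions nat \<Rightarrow> nat; the paper's x_1 x_2 ... corresponds to x 0, x 1, ...\<close>

definition digits :: "nat \<Rightarrow> (nat \<Rightarrow> nat) \<Rightarrow> bool" where
  "digits M x \<longleftrightarrow> (\<forall>i. x i \<le> M)"

definition lex_less :: "(nat \<Rightarrow> nat) \<Rightarrow> (nat \<Rightarrow> nat) \<Rightarrow> bool" where
  "lex_less a b \<longleftrightarrow> (\<exists>n. (\<forall>i<n. a i = b i) \<and> a n < b n)"

definition lex_le :: "(nat \<Rightarrow> nat) \<Rightarrow> (nat \<Rightarrow> nat) \<Rightarrow> bool" where
  "lex_le a b \<longleftrightarrow> a = b \<or> lex_less a b"

definition reflect :: "nat \<Rightarrow> (nat \<Rightarrow> nat) \<Rightarrow> (nat \<Rightarrow> nat)" where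
  "reflect M x = (\<lambda>i. M - x i)"

definition shift :: "nat \<Rightarrow> (nat \<Rightarrow> nat) \<Rightarrow> (nat \<Rightarrow> nat)" where
  "shift n x = (\<lambda>i. x (i + n))"

definition expansions_of_one :: "nat \<Rightarrow> real \<Rightarrow> (nat \<Rightarrow> nat) set" where
  "expansions_of_one M q = {a. digits M a \<and> infinite {i. a i \<noteq> 0}
       \<and> (\<Sum>i. real (a i) / q ^ (i + 1)) = 1}"

definition alpha :: "nat \<Rightarrow> real \<Rightarrow> (nat \<Rightarrow> nat)" where
  "alpha M q = (THE a. a \<in> expansions_of_one M q \<and>
                  (\<forall>b \<in> expansions_of_one M q. lex_le b a))"

definition Vq :: "nat \<Rightarrow> real \<Rightarrow> (nat \<Rightarrow> nat) set" where
  "Vq M q = {x. digits M x \<and> (\<forall>n. lex_le (reflect M (alpha M q)) (shift n x)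
                                    \<and> lex_le (shift n x) (alpha M q))}"

definition VV :: "nat \<Rightarrow> (nat \<Rightarrow> nat) set" where
  "VV M = {a. digits M a \<and> (\<forall>n. lex_le (reflect M a) (shift n a) \<and> lex_le (shift n a) a)}"

fun bitcount :: "nat \<Rightarrow> nat" where
  "bitcount 0 = 0"
| "bitcount (Suc n) = Suc n mod 2 + bitcount (Suc n div 2)"

definition thue_morse :: "nat \<Rightarrow> nat" where
  "thue_morse n = bitcount n mod 2"

text \<open>lam M j = lambda_(j+1).\<close>
definition kl_seq :: "nat \<Rightarrow> nat \<Rightarrow> nat" where
  "kl_seq M j = (if even M
     then nat (int (M div 2) + int (thue_morse (j + 1)) - int (thue_morse j))
     else M div 2 + thue_morse (j + 1))"

definition q_KL :: "nat \<Rightarrow> real" where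
  "q_KL M = (THE q. 1 < q \<and> q \<le> real M + 1 \<and> alpha M q = kl_seq M)"

definition occurs_in :: "nat list \<Rightarrow> (nat \<Rightarrow> nat) \<Rightarrow> bool" where
  "occurs_in w x \<longleftrightarrow> (\<exists>k. \<forall>i < length w. x (k + i) = w ! i)"

end

theory Submission
  imports Defs
begin

text \<open>
  Every window of length L of a sequence in V_q either differs from the first L digits of
  alpha(q) and of its reflection -- and then the inequalities defining V_q are already decided
  inside the window -- or it coincides with one of them. For p < q close to q the quasi-greedy
  expansions alpha(p) and alpha(q) share their first L digits (the quasi-greedy algorithm is
  left continuous), so the same dichotomy holds with alpha(p). Keeping a sequence of V_q up to
  its first window of the second kind, and continuing there with alpha(p) or its reflection
  (both in V_p because alpha(p) is in V), yields a sequence of V_p with the same prefix.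
\<close>

lemma lex_antisym: "lex_le a b \<Longrightarrow> lex_le b a \<Longrightarrow> a = b"
  unfolding lex_le_def lex_less_def by (metis less_asym linorder_neqE_nat)

lemma lex_less_or_greater: "a \<noteq> b \<Longrightarrow> lex_less a b \<or> lex_less b a"
proof -
  assume "a \<noteq> b"
  then have ex: "\<exists>n. a n \<noteq> b n" by (auto simp: fun_eq_iff)
  define d where "d = (LEAST n. a n \<noteq> b n)"
  have "a d \<noteq> b d" using LeastI_ex[OF ex] by (simp add: d_def)
  moreover have "\<forall>i<d. a i = b i" using not_less_Least d_def by blast
  ultimately show ?thesis unfolding lex_less_def by (metis linorder_neqE_nat)
qed

lemma lex_less_if_prefix_differs:
  assumes "lex_le u v" and "\<not> (\<forall>i<L. u i = v i)"
    and "\<forall>i<L. u' i = u i" and "\<forall>i<L. v' i = v i"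
  shows "lex_less u' v'"
proof -
  from assms(1,2) have "lex_less u v" by (auto simp: lex_le_def)
  then obtain d where d: "\<forall>i<d. u i = v i" "u d < v d" unfolding lex_less_def by auto
  with assms(2) have "d < L" by (meson not_less order_less_le_trans)
  then show ?thesis unfolding lex_less_def using d assms(3,4) by (intro exI[of _ d]) auto
qed

lemma digits_shift: "digits M x \<Longrightarrow> digits M (shift n x)"
  by (simp add: digits_def shift_def)

lemma digits_reflect: "digits M (reflect M x)"
  by (simp add: digits_def reflect_def)

lemma reflect_reflect: "digits M x \<Longrightarrow> reflect M (reflect M x) = x"
  by (auto simp: reflect_def digits_def)

lemma shift_reflect: "shift n (reflect M x) = reflect M (shift n x)"
  by (simp add: shift_def reflect_def)

lemma shift_shift: "shift n (shift k x) = shift (n + k) x"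
  by (simp add: shift_def add.assoc)

lemma lex_le_reflect:
  assumes "digits M y" and "lex_le x y"
  shows "lex_le (reflect M y) (reflect M x)"
  using assms(2) unfolding lex_le_def
proof
  assume "lex_less x y"
  then obtain d where d: "\<forall>i<d. x i = y i" "x d < y d" unfolding lex_less_def by auto
  have "y d \<le> M" using assms(1) by (auto simp: digits_def)
  then have "lex_less (reflect M y) (reflect M x)"
    unfolding lex_less_def reflect_def using d by (intro exI[of _ d]) auto
  then show "reflect M y = reflect M x \<or> lex_less (reflect M y) (reflect M x)" by simp
qed auto

definition shift_bounded :: "nat \<Rightarrow> (nat \<Rightarrow> nat) \<Rightarrow> (nat \<Rightarrow> nat) set" where
  "shift_bounded M a =
     {x. digits M x \<and> (\<forall>n. lex_le (reflect M a) (shift n x) \<and> lex_le (shift n x) a)}"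

lemma Vq_eq_shift_bounded: "Vq M q = shift_bounded M (alpha M q)"
  by (simp add: Vq_def shift_bounded_def)

lemma VV_iff_shift_bounded: "a \<in> VV M \<longleftrightarrow> a \<in> shift_bounded M a"
  by (simp add: VV_def shift_bounded_def)

lemma shift_in_shift_bounded: "x \<in> shift_bounded M a \<Longrightarrow> shift k x \<in> shift_bounded M a"
  by (simp add: shift_bounded_def shift_shift digits_shift)

lemma reflect_in_shift_bounded:
  assumes "a \<in> VV M"
  shows "reflect M a \<in> shift_bounded M a"
proof -
  have da: "digits M a" and a: "\<And>n. lex_le (reflect M a) (shift n a) \<and> lex_le (shift n a) a"
    using assms by (auto simp: VV_def)
  have "lex_le (reflect M a) (shift n (reflect M a)) \<and> lex_le (shift n (reflect M a)) a" for n
  proof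
    show "lex_le (reflect M a) (shift n (reflect M a))"
      unfolding shift_reflect using lex_le_reflect[OF da] a by blast
    have "lex_le (reflect M (shift n a)) (reflect M (reflect M a))"
      using lex_le_reflect[OF digits_shift[OF da]] a by blast
    then show "lex_le (shift n (reflect M a)) a"
      unfolding shift_reflect reflect_reflect[OF da] .
  qed
  then show ?thesis by (simp add: shift_bounded_def digits_reflect)
qed

lemma shift_bounded_at_window:
  assumes x: "x \<in> shift_bounded M a" and ab: "\<forall>i<L. b i = a i"
    and upper: "\<not> (\<forall>i<L. x (n + i) = a i)" and lower: "\<not> (\<forall>i<L. x (n + i) = M - a i)"
    and xy: "\<forall>i<L. y (n + i) = x (n + i)"
  shows "lex_le (reflect M b) (shift n y) \<and> lex_le (shift n y) b"
proof -
  have x_n: "lex_le (reflect M a) (shift n x)" "lex_le (shift n x) a"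
    using x by (auto simp: shift_bounded_def)
  have "\<not> (\<forall>i<L. shift n x i = a i)" "\<not> (\<forall>i<L. reflect M a i = shift n x i)"
    using upper lower by (auto simp: shift_def reflect_def add.commute)
  moreover have "\<forall>i<L. shift n y i = shift n x i" "\<forall>i<L. reflect M b i = reflect M a i"
    using xy ab by (simp_all add: shift_def reflect_def add.commute)
  ultimately show ?thesis
    using lex_less_if_prefix_differs[OF x_n(2)] lex_less_if_prefix_differs[OF x_n(1)] ab
    by (simp add: lex_le_def)
qed

lemma shift_bounded_change_bound:
  assumes x: "x \<in> shift_bounded M a" and b: "b \<in> VV M" and ab: "\<forall>i<L. b i = a i"
  shows "\<exists>y \<in> shift_bounded M b. \<forall>i<L. y i = x i"
proof -
  define block where
    "block k \<longleftrightarrow> (\<forall>i<L. x (k + i) = a i) \<or> (\<forall>i<L. x (k + i) = M - a i)" for k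
  have dx: "digits M x" using x by (simp add: shift_bounded_def)
  show ?thesis
  proof (cases "\<exists>k. block k")
    case False
    then have "x \<in> shift_bounded M b"
      using shift_bounded_at_window[OF x ab] dx by (auto simp: shift_bounded_def block_def)
    then show ?thesis by auto
  next
    case True
    define k where "k = (LEAST k. block k)"
    have "block k" using True LeastI_ex k_def by metis
    then obtain c where c: "c \<in> shift_bounded M b" "\<forall>i<L. c i = x (k + i)"
      using VV_iff_shift_bounded[of b] reflect_in_shift_bounded[OF b] b ab
      by (auto simp: block_def reflect_def)
    define y where "y i = (if i < k then x i else c (i - k))" for i
    have xy: "y j = x j" if "j < k + L" for j
      using that c(2) by (auto simp: y_def)
    have "lex_le (reflect M b) (shift n y) \<and> lex_le (shift n y) b" for n
    proof (cases "n < k")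
      case True
      then have "\<not> block n" using not_less_Least k_def by metis
      with True show ?thesis
        using shift_bounded_at_window[OF x ab] xy by (simp add: block_def)
    next
      case False
      then have "shift n y = shift (n - k) c" by (auto simp: shift_def y_def fun_eq_iff)
      then show ?thesis using c(1) by (simp add: shift_bounded_def)
    qed
    moreover have "digits M y" using dx c(1) by (simp add: digits_def y_def shift_bounded_def)
    ultimately have "y \<in> shift_bounded M b" by (simp add: shift_bounded_def)
    moreover have "\<forall>i<L. y i = x i" using xy by simp
    ultimately show ?thesis by blast
  qed
qed

section \<open>The quasi-greedy algorithm\<close>

text \<open>The largest digit in {0..M} strictly below t (for 0 < t); the quasi-greedy algorithm
  picks it at every step, the remainder staying in (0, 1].\<close>

definition qg_digit :: "nat \<Rightarrow> real \<Rightarrow> nat" where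
  "qg_digit M t = (if real M < t then M else nat (\<lceil>t\<rceil> - 1))"

fun qg_remainder :: "nat \<Rightarrow> real \<Rightarrow> nat \<Rightarrow> real" where
  "qg_remainder M q 0 = 1"
| "qg_remainder M q (Suc n) = q * qg_remainder M q n - real (qg_digit M (q * qg_remainder M q n))"

definition quasi_greedy :: "nat \<Rightarrow> real \<Rightarrow> nat \<Rightarrow> nat" where
  "quasi_greedy M q n = qg_digit M (q * qg_remainder M q n)"

lemma qg_digit_le: "qg_digit M t \<le> M"
proof (cases "real M < t")
  case False
  then have "\<lceil>t\<rceil> \<le> int M" by (simp add: ceiling_le_iff)
  then show ?thesis using False by (simp add: qg_digit_def)
qed (simp add: qg_digit_def)

lemma qg_digit_eq_ceiling:
  assumes "0 < t" and "t \<le> real M"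
  shows "real (qg_digit M t) = of_int \<lceil>t\<rceil> - 1"
proof -
  have "1 \<le> \<lceil>t\<rceil>" using assms(1) le_of_int_ceiling[of t] by linarith
  then show ?thesis using assms(2) by (simp add: qg_digit_def)
qed

lemma qg_digit_bounds:
  assumes "0 < t" and "t \<le> real M + 1"
  shows "0 < t - qg_digit M t \<and> t - qg_digit M t \<le> 1"
proof (cases "real M < t")
  case False
  then show ?thesis using qg_digit_eq_ceiling[OF assms(1)] ceiling_correct[of t] by simp
qed (use assms in \<open>simp add: qg_digit_def\<close>)

lemma qg_remainder_bounds:
  assumes "1 < q" and "q \<le> real M + 1"
  shows "0 < qg_remainder M q n \<and> qg_remainder M q n \<le> 1"
proof (induction n)
  case (Suc n)
  have "0 < q * qg_remainder M q n" using Suc assms by simp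
  moreover have "q * qg_remainder M q n \<le> real M + 1"
    using Suc assms mult_mono[of q "real M + 1" "qg_remainder M q n" 1] by simp
  ultimately show ?case using qg_digit_bounds by simp
qed simp

lemma digits_quasi_greedy: "digits M (quasi_greedy M q)"
  by (simp add: digits_def quasi_greedy_def qg_digit_le)

lemma quasi_greedy_partial_sum:
  assumes "1 < q"
  shows "(\<Sum>i<n. real (quasi_greedy M q i) / q ^ (i + 1)) = 1 - qg_remainder M q n / q ^ n"
proof (induction n)
  case (Suc n)
  have "qg_remainder M q (Suc n) / q ^ Suc n
        = q * qg_remainder M q n / (q * q ^ n) - real (quasi_greedy M q n) / q ^ (n + 1)"
    by (simp add: quasi_greedy_def diff_divide_distrib)
  also have "q * qg_remainder M q n / (q * q ^ n) = qg_remainder M q n / q ^ n"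
    using assms by simp
  finally show ?case using Suc by simp
qed simp

lemma summable_expansion:
  assumes "digits M c" and "1 < q"
  shows "summable (\<lambda>i. real (c i) / q ^ (i + 1))"
proof (rule summable_comparison_test')
  show "summable (\<lambda>i. real M * (1 / q) ^ i)"
    using assms(2) by (intro summable_mult summable_geometric) simp
  fix n
  have "real (c n) \<le> real M" using assms(1) by (simp add: digits_def)
  moreover have "q ^ n \<le> q ^ (n + 1)" "0 < q ^ n" using assms(2) by simp_all
  ultimately have "real (c n) / q ^ (n + 1) \<le> real M / q ^ n"
    by (meson frac_le of_nat_0_le_iff order_trans)
  then show "norm (real (c n) / q ^ (n + 1)) \<le> real M * (1 / q) ^ n"
    using assms(2) by (simp add: power_one_over)
qed

lemma partial_sum_less_expansion:
  assumes "digits M c" and "1 < q" and "infinite {i. c i \<noteq> 0}"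
  shows "(\<Sum>i<n. real (c i) / q ^ (i + 1)) < (\<Sum>i. real (c i) / q ^ (i + 1))"
proof -
  have summ: "summable (\<lambda>i. real (c i) / q ^ (i + 1))"
    using summable_expansion[OF assms(1,2)] .
  obtain j where j: "n \<le> j" "c j \<noteq> 0"
    using assms(3) by (metis (mono_tags) finite_nat_set_iff_bounded_le mem_Collect_eq nat_le_linear)
  have "0 < (\<Sum>i. real (c (i + n)) / q ^ (i + n + 1))"
  proof (rule suminf_pos2)
    show "summable (\<lambda>i. real (c (i + n)) / q ^ (i + n + 1))"
      using summable_ignore_initial_segment[OF summ, of n] by simp
    show "0 < real (c (j - n + n)) / q ^ (j - n + n + 1)"
      using j assms(2) by simp
  qed (use assms(2) in simp)
  then show ?thesis
    using suminf_split_initial_segment[OF summ, of n] by simp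
qed

lemma quasi_greedy_sums:
  assumes "1 < q" and "q \<le> real M + 1"
  shows "(\<lambda>i. real (quasi_greedy M q i) / q ^ (i + 1)) sums 1"
proof -
  have "(\<lambda>n. qg_remainder M q n / q ^ n) \<longlonglongrightarrow> 0"
  proof (rule real_tendsto_sandwich[where f = "\<lambda>n. 0" and h = "\<lambda>n. (1 / q) ^ n"])
    show "(\<lambda>n. (1 / q) ^ n) \<longlonglongrightarrow> 0" using assms by (intro LIMSEQ_power_zero) simp
    show "\<forall>\<^sub>F n in sequentially. qg_remainder M q n / q ^ n \<le> (1 / q) ^ n"
      using qg_remainder_bounds[OF assms] assms by (auto simp: power_one_over divide_right_mono)
    show "\<forall>\<^sub>F n in sequentially. 0 \<le> qg_remainder M q n / q ^ n"
      using qg_remainder_bounds[OF assms] assms by (auto intro!: always_eventually less_imp_le)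
  qed simp
  then have "(\<lambda>n. 1 - qg_remainder M q n / q ^ n) \<longlonglongrightarrow> 1 - 0" by (intro tendsto_diff) auto
  then show ?thesis unfolding sums_def quasi_greedy_partial_sum[OF assms(1)] by simp
qed

lemma quasi_greedy_infinite_nonzero:
  assumes "1 < q" and "q \<le> real M + 1"
  shows "infinite {i. quasi_greedy M q i \<noteq> 0}"
proof
  assume "finite {i. quasi_greedy M q i \<noteq> 0}"
  then obtain n0 where n0: "\<forall>i\<ge>n0. quasi_greedy M q i = 0"
    by (metis (mono_tags) finite_nat_set_iff_bounded_le mem_Collect_eq not_less_eq_eq)
  have grow: "qg_remainder M q (n0 + k) = q ^ k * qg_remainder M q n0" for k
  proof (induction k)
    case (Suc k)
    have "qg_digit M (q * qg_remainder M q (n0 + k)) = 0" using n0 by (simp add: quasi_greedy_def)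
    then show ?case using Suc by simp
  qed simp
  have r0: "0 < qg_remainder M q n0" using qg_remainder_bounds[OF assms] by simp
  obtain k where "1 / qg_remainder M q n0 < q ^ k" using real_arch_pow[OF assms(1)] by blast
  then have "1 < q ^ k * qg_remainder M q n0" using r0 by (simp add: field_simps)
  then show False using qg_remainder_bounds[OF assms, of "n0 + k"] grow by simp
qed

text \<open>A digit sequence lexicographically above the quasi-greedy one has a partial sum \<ge> 1,
  so it cannot be an infinite expansion of 1.\<close>

lemma partial_sum_ge_one_above_quasi_greedy:
  assumes "1 < q" and "q \<le> real M + 1" and "digits M c"
    and "\<forall>i<d. quasi_greedy M q i = c i" and "quasi_greedy M q d < c d"
  shows "1 \<le> (\<Sum>i<Suc d. real (c i) / q ^ (i + 1))"
proof -
  define t where "t = q * qg_remainder M q d"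
  have t0: "0 < t" using qg_remainder_bounds[OF assms(1,2)] assms(1) by (simp add: t_def)
  have "qg_digit M t < M"
    using assms(3,5) unfolding quasi_greedy_def t_def[symmetric] digits_def
    by (metis order_less_le_trans)
  then have "real (qg_digit M t) = of_int \<lceil>t\<rceil> - 1"
    by (intro qg_digit_eq_ceiling[OF t0]) (cases "real M < t", auto simp: qg_digit_def)
  moreover have "real (qg_digit M t) + 1 \<le> real (c d)"
    using assms(5) unfolding quasi_greedy_def t_def[symmetric] by linarith
  ultimately have "of_int \<lceil>t\<rceil> \<le> real (c d)" by linarith
  then have ct: "t \<le> real (c d)" using le_of_int_ceiling[of t] by linarith
  have "1 = 1 - qg_remainder M q d / q ^ d + t / q ^ (d + 1)"
    using assms(1) by (simp add: t_def field_simps)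
  also have "\<dots> \<le> 1 - qg_remainder M q d / q ^ d + real (c d) / q ^ (d + 1)"
    using ct assms(1) by (simp add: divide_right_mono)
  also have "\<dots> = (\<Sum>i<Suc d. real (c i) / q ^ (i + 1))"
    using assms(4) quasi_greedy_partial_sum[OF assms(1), of M d] by simp
  finally show ?thesis .
qed

lemma quasi_greedy_lex_max:
  assumes "1 < q" and "q \<le> real M + 1" and "c \<in> expansions_of_one M q"
  shows "lex_le c (quasi_greedy M q)"
proof (rule ccontr)
  assume "\<not> lex_le c (quasi_greedy M q)"
  then have "lex_less (quasi_greedy M q) c" using lex_less_or_greater unfolding lex_le_def by blast
  then obtain d where d: "\<forall>i<d. quasi_greedy M q i = c i" "quasi_greedy M q d < c d"
    unfolding lex_less_def by auto
  have c: "digits M c" "infinite {i. c i \<noteq> 0}" "(\<Sum>i. real (c i) / q ^ (i + 1)) = 1"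
    using assms(3) by (auto simp: expansions_of_one_def)
  show False
    using partial_sum_ge_one_above_quasi_greedy[OF assms(1,2) c(1) d]
      partial_sum_less_expansion[OF c(1) assms(1) c(2), of "Suc d"] c(3) by linarith
qed

lemma alpha_eq_quasi_greedy:
  assumes "1 < q" and "q \<le> real M + 1"
  shows "alpha M q = quasi_greedy M q"
  unfolding alpha_def
proof (rule the_equality)
  show "quasi_greedy M q \<in> expansions_of_one M q
        \<and> (\<forall>b\<in>expansions_of_one M q. lex_le b (quasi_greedy M q))"
    using digits_quasi_greedy quasi_greedy_infinite_nonzero[OF assms] quasi_greedy_sums[OF assms]
      quasi_greedy_lex_max[OF assms]
    by (auto simp: expansions_of_one_def sums_iff)
  then show "\<And>a. a \<in> expansions_of_one M q \<and> (\<forall>b\<in>expansions_of_one M q. lex_le b a)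
               \<Longrightarrow> a = quasi_greedy M q"
    using lex_antisym by blast
qed

section \<open>Left continuity of the quasi-greedy expansion\<close>

text \<open>Approaching t from below does not change the digit: it only jumps just above integers.\<close>

lemma qg_digit_eventually_eq:
  assumes f: "f \<longlonglongrightarrow> t" and below: "\<forall>\<^sub>F n in sequentially. f n < t" and "0 < t"
  shows "\<forall>\<^sub>F n in sequentially. qg_digit M (f n) = qg_digit M t"
proof (cases "real M < t")
  case True
  have "\<forall>\<^sub>F n in sequentially. real M < f n" using order_tendstoD(1)[OF f True] .
  then show ?thesis by eventually_elim (use True in \<open>simp add: qg_digit_def\<close>)
next
  case False
  have "of_int \<lceil>t\<rceil> - 1 < t" using ceiling_correct[of t] by simp
  then have "\<forall>\<^sub>F n in sequentially. of_int \<lceil>t\<rceil> - 1 < f n" using order_tendstoD(1)[OF f] by blast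
  with below show ?thesis
  proof eventually_elim
    case (elim n)
    have "f n \<le> of_int \<lceil>t\<rceil>" using elim(1) le_of_int_ceiling[of t] by linarith
    then have "\<lceil>f n\<rceil> = \<lceil>t\<rceil>" using elim(2) by (intro ceiling_unique) auto
    moreover have "\<not> real M < f n" using False elim(1) by linarith
    ultimately show ?case using False by (simp add: qg_digit_def)
  qed
qed

text \<open>The inequality on remainders is carried along so that the arguments of the next digit
  approach their limit from below.\<close>

lemma quasi_greedy_left_continuous_aux:
  assumes q: "1 < q" "q \<le> real M + 1"
    and p: "\<forall>n. 1 < p n \<and> p n < q" "p \<longlonglongrightarrow> q"
  shows "(\<forall>\<^sub>F n in sequentially. (\<forall>j<i. quasi_greedy M (p n) j = quasi_greedy M q j)
                                 \<and> qg_remainder M (p n) i \<le> qg_remainder M q i)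
         \<and> (\<lambda>n. qg_remainder M (p n) i) \<longlonglongrightarrow> qg_remainder M q i"
proof (induction i)
  case (Suc i)
  have rp: "0 < qg_remainder M (p n) i" for n
  proof -
    have "1 < p n" "p n \<le> real M + 1" using p(1)[rule_format, of n] q(2) by linarith+
    then show ?thesis using qg_remainder_bounds by blast
  qed
  define t where "t = q * qg_remainder M q i"
  have t0: "0 < t" using qg_remainder_bounds[OF q] q by (simp add: t_def)
  have lim: "(\<lambda>n. p n * qg_remainder M (p n) i) \<longlonglongrightarrow> t"
    unfolding t_def using Suc p(2) by (intro tendsto_mult) auto
  have below: "\<forall>\<^sub>F n in sequentially. p n * qg_remainder M (p n) i < t"
    using conjunct1[OF Suc]
  proof eventually_elim
    case (elim n)
    have "p n * qg_remainder M (p n) i < q * qg_remainder M (p n) i" using p rp[of n] by simp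
    also have "\<dots> \<le> t" using elim q by (simp add: t_def)
    finally show ?case .
  qed
  have digit: "\<forall>\<^sub>F n in sequentially. qg_digit M (p n * qg_remainder M (p n) i) = qg_digit M t"
    by (rule qg_digit_eventually_eq[OF lim below t0])
  have "\<forall>\<^sub>F n in sequentially. (\<forall>j<Suc i. quasi_greedy M (p n) j = quasi_greedy M q j)
           \<and> qg_remainder M (p n) (Suc i) \<le> qg_remainder M q (Suc i)"
    using conjunct1[OF Suc] digit below
    by eventually_elim (auto simp: quasi_greedy_def t_def less_Suc_eq)
  moreover have "(\<lambda>n. qg_remainder M (p n) (Suc i)) \<longlonglongrightarrow> qg_remainder M q (Suc i)"
  proof (rule Lim_transform_eventually)
    show "(\<lambda>n. p n * qg_remainder M (p n) i - real (qg_digit M t)) \<longlonglongrightarrow> qg_remainder M q (Suc i)"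
      using lim by (auto simp: t_def intro!: tendsto_diff)
    show "\<forall>\<^sub>F n in sequentially. p n * qg_remainder M (p n) i - real (qg_digit M t)
                                 = qg_remainder M (p n) (Suc i)"
      using digit by eventually_elim simp
  qed
  ultimately show ?case by simp
qed simp

lemma quasi_greedy_left_continuous:
  assumes "1 < q" and "q \<le> real M + 1"
    and "\<forall>n. 1 < p n \<and> p n < q" and "p \<longlonglongrightarrow> q"
  shows "\<forall>\<^sub>F n in sequentially. \<forall>j<L. quasi_greedy M (p n) j = quasi_greedy M q j"
  using conjunct1[OF quasi_greedy_left_continuous_aux[OF assms, of L]]
  by (rule eventually_mono) simp

theorem lemma3p4:
  fixes M :: nat and q :: real and w :: "nat list" and p :: "nat \<Rightarrow> real"
  assumes "M \<ge> 1"
    and "q_KL M < q" and "q \<le> real M + 1"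
    and "\<exists>x \<in> Vq M q. occurs_in w x"
    and "\<forall>n. 1 < p n \<and> p n \<le> real M + 1"
    and "strict_mono p"
    and "p \<longlonglongrightarrow> q"
    and "\<forall>n. alpha M (p n) \<in> VV M"
  shows "\<exists>N0. \<forall>n \<ge> N0. \<exists>x \<in> Vq M (p n). occurs_in w x"
proof -
  have p_less: "p n < q" for n
    using assms(6,7) by (meson lessI order_less_le_trans strict_mono_less incseq_le strict_mono_mono)
  then have q1: "1 < q" using assms(5) by (meson less_trans)
  obtain x k where "x \<in> Vq M q" and xw: "\<forall>i<length w. x (k + i) = w ! i"
    using assms(4) unfolding occurs_in_def by blast
  then have x: "shift k x \<in> shift_bounded M (alpha M q)"
    by (simp add: Vq_eq_shift_bounded shift_in_shift_bounded)
  obtain N0 where N0: "\<forall>n\<ge>N0. \<forall>j<length w. quasi_greedy M (p n) j = quasi_greedy M q j"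
    using quasi_greedy_left_continuous[OF q1 assms(3) _ assms(7), of "length w"] assms(5) p_less
    unfolding eventually_sequentially by blast
  have "\<exists>y \<in> Vq M (p n). occurs_in w y" if "n \<ge> N0" for n
  proof -
    have "\<forall>j<length w. alpha M (p n) j = alpha M q j"
      using N0 that alpha_eq_quasi_greedy[OF q1 assms(3)] alpha_eq_quasi_greedy assms(5) by simp
    then obtain y where "y \<in> shift_bounded M (alpha M (p n))" "\<forall>i<length w. y i = shift k x i"
      using shift_bounded_change_bound[OF x] assms(8) by blast
    then show ?thesis
      using xw unfolding Vq_eq_shift_bounded occurs_in_def
      by (intro bexI[of _ y] exI[of _ 0]) (auto simp: shift_def add.commute)
  qed
  then show ?thesis by blast
qed

end
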